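(* Let $U$ be a finite nonempty set, $R$ an equivalence relation on $U$, and $M(R)$ the support matroid induced by $R$. For every $X\subseteq U$, $X$ is not a closed set of $M(R)$ if and only if $X$ is an $R$-rough set.
   Context: For $x\in U$, $RN(x)=\{y\in U\mid xRy\}$; $R_{*}(X)=\{x\in U\mid RN(x)\subseteq X\}$ and $R^{*}(X)=\{x\in U\mid RN(x)\cap X\neq\emptyset\}$. A set $X\subseteq U$ is $R$-precise if $R^{*}(X)=R_{*}(X)$, and $R$-rough otherwise. Let $\mathbf{S}(R)=\{X\subseteq U\mid R^{*}(X)=U\}$. The support matroid $M(R)=(U,\mathbf{I}(R))$ is the matroid on $U$ whose independent sets $\mathbf{I}(R)$ are the subsets of inclusion-minimal members of $\mathbf{S}(R)$. For a matroid $(U,\mathbf{I})$, the rank is $r(X)=\max\{|I|\mid I\subseteq X, I\in\mathbf{I}\}$, the closure is $cl(X)=\{e\in U\mid r(X)=r(X\cup\{e\})\}$, and $X$ is closed if $cl(X)=X$. *)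

theory Defs
  imports Main
begin

definition RN :: "'a set \<Rightarrow> ('a \<times> 'a) set \<Rightarrow> 'a \<Rightarrow> 'a set" where
  "RN U R x = {y \<in> U. (x, y) \<in> R}"

definition lower_approx :: "'a set \<Rightarrow> ('a \<times> 'a) set \<Rightarrow> 'a set \<Rightarrow> 'a set" where
  "lower_approx U R X = {x \<in> U. RN U R x \<subseteq> X}"

definition upper_approx :: "'a set \<Rightarrow> ('a \<times> 'a) set \<Rightarrow> 'a set \<Rightarrow> 'a set" where
  "upper_approx U R X = {x \<in> U. RN U R x \<inter> X \<noteq> {}}"

definition R_precise :: "'a set \<Rightarrow> ('a \<times> 'a) set \<Rightarrow> 'a set \<Rightarrow> bool" where
  "R_precise U R X \<longleftrightarrow> upper_approx U R X = lower_approx U R X"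

definition R_rough :: "'a set \<Rightarrow> ('a \<times> 'a) set \<Rightarrow> 'a set \<Rightarrow> bool" where
  "R_rough U R X \<longleftrightarrow> \<not> R_precise U R X"

definition supports :: "'a set \<Rightarrow> ('a \<times> 'a) set \<Rightarrow> 'a set set" where
  "supports U R = {X. X \<subseteq> U \<and> upper_approx U R X = U}"

definition minimal_supports :: "'a set \<Rightarrow> ('a \<times> 'a) set \<Rightarrow> 'a set set" where
  "minimal_supports U R =
     {X \<in> supports U R. \<forall>Y \<in> supports U R. Y \<subseteq> X \<longrightarrow> Y = X}"

definition support_indep :: "'a set \<Rightarrow> ('a \<times> 'a) set \<Rightarrow> 'a set set" where
  "support_indep U R = {I. \<exists>B \<in> minimal_supports U R. I \<subseteq> B}"

definition mat_rank :: "'a set set \<Rightarrow> 'a set \<Rightarrow> nat" where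
  "mat_rank Ind X = Max {card I | I. I \<subseteq> X \<and> I \<in> Ind}"

definition mat_closure :: "'a set \<Rightarrow> 'a set set \<Rightarrow> 'a set \<Rightarrow> 'a set" where
  "mat_closure E Ind X = {e \<in> E. mat_rank Ind X = mat_rank Ind (X \<union> {e})}"

definition mat_closed :: "'a set \<Rightarrow> 'a set set \<Rightarrow> 'a set \<Rightarrow> bool" where
  "mat_closed E Ind X \<longleftrightarrow> mat_closure E Ind X = X"

end

(*
  For an equivalence relation R on U the minimal supports are exactly the transversals of the
  partition U // R, so M(R) is the partition matroid in which a set is independent iff it meets
  every class at most once. Its rank function counts the classes a set meets, so the closure of X
  is the union of the classes meeting X, i.e. the upper approximation R``X. Hence X is closed iff
  X is a union of classes, which is exactly R-precision.
*)
theory Submission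
  imports Defs
begin

lemma extend_inj_on_to_transversal:
  assumes "I \<subseteq> U" and "inj_on f I"
  obtains B where "I \<subseteq> B" and "B \<subseteq> U" and "inj_on f B" and "f ` B = f ` U"
proof -
  obtain V where V: "V \<subseteq> U" "inj_on f V" "f ` U - f ` I = f ` V"
    using subset_image_inj[of "f ` U - f ` I" f U] by blast
  have "f ` I \<subseteq> f ` U"
    using assms(1) by (rule image_mono)
  then have "f ` (I \<union> V) = f ` U"
    using V(3) by auto
  moreover have "inj_on f (I \<union> V)"
    using assms(2) V(2,3) by (auto simp: inj_on_Un)
  ultimately show thesis
    by (intro that[of "I \<union> V"]) (use assms(1) V(1) in auto)
qed

lemma minimal_image_covers_eq_inj_on:
  fixes U :: "'a set" and f :: "'a \<Rightarrow> 'b"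
  defines "S \<equiv> {X. X \<subseteq> U \<and> f ` X = f ` U}"
  shows "{B \<in> S. \<forall>Y \<in> S. Y \<subseteq> B \<longrightarrow> Y = B} = {B \<in> S. inj_on f B}"
proof (intro Collect_cong conj_cong refl iffI)
  fix B assume "B \<in> S" and min: "\<forall>Y \<in> S. Y \<subseteq> B \<longrightarrow> Y = B"
  show "inj_on f B"
  proof (rule inj_onI, rule ccontr)
    fix a b assume ab: "a \<in> B" "b \<in> B" "f a = f b" "a \<noteq> b"
    then have "f ` (B - {a}) = f ` B"
      by (auto intro: rev_image_eqI)
    then have "B - {a} \<in> S"
      using \<open>B \<in> S\<close> by (auto simp: S_def)
    with min ab(1) show False
      by blast
  qed
next
  fix B assume "B \<in> S" and inj: "inj_on f B"
  show "\<forall>Y \<in> S. Y \<subseteq> B \<longrightarrow> Y = B"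
  proof (intro ballI impI subset_antisym)
    fix Y assume "Y \<in> S" "Y \<subseteq> B"
    show "B \<subseteq> Y"
    proof
      fix b assume "b \<in> B"
      then have "f b \<in> f ` Y"
        using \<open>B \<in> S\<close> \<open>Y \<in> S\<close> by (auto simp: S_def)
      then obtain y where "y \<in> Y" "f b = f y"
        by blast
      with inj \<open>Y \<subseteq> B\<close> \<open>b \<in> B\<close> show "b \<in> Y"
        by (metis inj_onD subsetD)
    qed
  qed
qed

lemma mat_rank_inj_on_indep:
  assumes "finite A" and "A \<subseteq> U"
  shows "mat_rank {I. I \<subseteq> U \<and> inj_on f I} A = card (f ` A)"
  unfolding mat_rank_def
proof (rule Max_eqI)
  show "finite {card I |I. I \<subseteq> A \<and> I \<in> {I. I \<subseteq> U \<and> inj_on f I}}"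
    using \<open>finite A\<close> by simp
next
  fix n assume "n \<in> {card I |I. I \<subseteq> A \<and> I \<in> {I. I \<subseteq> U \<and> inj_on f I}}"
  then obtain I where "n = card I" "I \<subseteq> A" "inj_on f I"
    by blast
  then show "n \<le> card (f ` A)"
    using \<open>finite A\<close> by (metis card_image card_mono finite_imageI image_mono)
next
  obtain B where "B \<subseteq> A" "inj_on f B" "f ` B = f ` A"
    using extend_inj_on_to_transversal[of "{}" A f] by auto
  then show "card (f ` A) \<in> {card I |I. I \<subseteq> A \<and> I \<in> {I. I \<subseteq> U \<and> inj_on f I}}"
    using \<open>A \<subseteq> U\<close> by (metis (mono_tags, lifting) card_image mem_Collect_eq order_trans)
qed

lemma mat_closure_inj_on_indep:
  assumes "finite X" and "X \<subseteq> U"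
  shows "mat_closure U {I. I \<subseteq> U \<and> inj_on f I} X = {e \<in> U. f e \<in> f ` X}"
  using assms by (auto simp: mat_closure_def mat_rank_inj_on_indep card_insert_if split: if_split_asm)

lemma RN_equiv: "equiv U R \<Longrightarrow> RN U R x = R``{x}"
  by (auto simp: RN_def dest: equiv_type)

lemma upper_approx_equiv:
  assumes "equiv U R"
  shows "upper_approx U R X = R``X"
proof -
  have "R \<subseteq> U \<times> U" and "sym R"
    using assms by (auto elim: equivE)
  then show ?thesis
    using assms by (auto simp: upper_approx_def RN_equiv dest: symD)
qed

lemma supports_equiv:
  assumes "equiv U R"
  shows "supports U R = {X. X \<subseteq> U \<and> (\<lambda>x. R``{x}) ` X = (\<lambda>x. R``{x}) ` U}"
proof -
  have covers: "R``X = U \<longleftrightarrow> (\<lambda>x. R``{x}) ` X = (\<lambda>x. R``{x}) ` U" if "X \<subseteq> U" for X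
  proof
    assume "R``X = U"
    show "(\<lambda>x. R``{x}) ` X = (\<lambda>x. R``{x}) ` U"
    proof (rule subset_antisym)
      show "(\<lambda>x. R``{x}) ` X \<subseteq> (\<lambda>x. R``{x}) ` U"
        using \<open>X \<subseteq> U\<close> by (rule image_mono)
      show "(\<lambda>x. R``{x}) ` U \<subseteq> (\<lambda>x. R``{x}) ` X"
      proof (rule image_subsetI)
        fix u assume "u \<in> U"
        with \<open>R``X = U\<close> obtain x where "x \<in> X" "(x, u) \<in> R"
          by blast
        then show "R``{u} \<in> (\<lambda>x. R``{x}) ` X"
          by (intro rev_image_eqI[OF \<open>x \<in> X\<close>]) (simp add: equiv_class_eq[OF assms])
      qed
    qed
  next
    assume classes: "(\<lambda>x. R``{x}) ` X = (\<lambda>x. R``{x}) ` U"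
    show "R``X = U"
    proof (rule subset_antisym)
      show "R``X \<subseteq> U"
        using equiv_type[OF assms] by blast
      show "U \<subseteq> R``X"
      proof
        fix u assume "u \<in> U"
        then have "R``{u} \<in> (\<lambda>x. R``{x}) ` X"
          using classes by blast
        then obtain x where "x \<in> X" "R``{u} = R``{x}"
          by blast
        then show "u \<in> R``X"
          using equiv_class_self[OF assms \<open>u \<in> U\<close>] by blast
      qed
    qed
  qed
  show ?thesis
    unfolding supports_def upper_approx_equiv[OF assms]
    by (intro Collect_cong conj_cong refl) (erule covers)
qed

lemma minimal_supports_equiv:
  assumes "equiv U R"
  shows "minimal_supports U R = {B \<in> supports U R. inj_on (\<lambda>x. R``{x}) B}"
  unfolding minimal_supports_def supports_equiv[OF assms]
  by (rule minimal_image_covers_eq_inj_on)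

lemma support_indep_equiv:
  assumes "equiv U R"
  shows "support_indep U R = {I. I \<subseteq> U \<and> inj_on (\<lambda>x. R``{x}) I}"
proof (intro set_eqI iffI)
  fix I assume "I \<in> support_indep U R"
  then obtain B where "B \<in> minimal_supports U R" "I \<subseteq> B"
    by (auto simp: support_indep_def)
  then show "I \<in> {I. I \<subseteq> U \<and> inj_on (\<lambda>x. R``{x}) I}"
    by (auto simp: minimal_supports_equiv[OF assms] supports_equiv[OF assms] intro: inj_on_subset)
next
  fix I assume "I \<in> {I. I \<subseteq> U \<and> inj_on (\<lambda>x. R``{x}) I}"
  then obtain B where "I \<subseteq> B" "B \<subseteq> U" "inj_on (\<lambda>x. R``{x}) B"
      "(\<lambda>x. R``{x}) ` B = (\<lambda>x. R``{x}) ` U"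
    using extend_inj_on_to_transversal by blast
  then show "I \<in> support_indep U R"
    by (auto simp: support_indep_def minimal_supports_equiv[OF assms] supports_equiv[OF assms])
qed

lemma mat_closure_support_indep:
  assumes "equiv U R" and "finite U" and "X \<subseteq> U"
  shows "mat_closure U (support_indep U R) X = upper_approx U R X"
proof -
  have "finite X"
    using assms(2,3) by (rule finite_subset[rotated])
  then have "mat_closure U (support_indep U R) X = {e \<in> U. R``{e} \<in> (\<lambda>x. R``{x}) ` X}"
    unfolding support_indep_equiv[OF assms(1)] using assms(3) by (rule mat_closure_inj_on_indep)
  also have "\<dots> = R``X"
    using equiv_class_eq_iff[OF assms(1)] assms(3) by blast
  finally show ?thesis
    by (simp add: upper_approx_equiv[OF assms(1)])
qed

lemma R_precise_equiv:
  assumes "equiv U R" and "X \<subseteq> U"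
  shows "R_precise U R X \<longleftrightarrow> R``X = X"
proof -
  have lower: "lower_approx U R X \<subseteq> X"
    using equiv_class_self[OF assms(1)] by (auto simp: lower_approx_def RN_equiv[OF assms(1)])
  have upper: "X \<subseteq> R``X"
    using equiv_class_self[OF assms(1)] assms(2) by blast
  show ?thesis
  proof
    assume "R_precise U R X"
    then show "R``X = X"
      using lower upper by (simp add: R_precise_def upper_approx_equiv[OF assms(1)])
  next
    assume "R``X = X"
    then have "X \<subseteq> lower_approx U R X"
      using assms(2) by (auto simp: lower_approx_def RN_equiv[OF assms(1)])
    with \<open>R``X = X\<close> lower show "R_precise U R X"
      by (simp add: R_precise_def upper_approx_equiv[OF assms(1)])
  qed
qed

theorem corollary5:
  fixes U :: "'a set" and R :: "('a \<times> 'a) set" and X :: "'a set"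
  assumes "finite U" and "U \<noteq> {}" and "equiv U R" and "X \<subseteq> U"
  shows "\<not> mat_closed U (support_indep U R) X \<longleftrightarrow> R_rough U R X"
proof -
  have "mat_closed U (support_indep U R) X \<longleftrightarrow> R``X = X"
    unfolding mat_closed_def mat_closure_support_indep[OF assms(3,1,4)] upper_approx_equiv[OF assms(3)] ..
  then show ?thesis
    unfolding R_rough_def R_precise_equiv[OF assms(3,4)] by simp
qed

end
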